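(* Let $n$ be a positive integer and $k$ an integer with $0\le k\le n$. Then $$e_k\left(\left\{\csc^2\left(\tfrac{(2j-1)\pi}{4n+2}\right) : j=1,\dots,n\right\}\right) = \frac{(n+k)!\,4^k}{(2k)!\,(n-k)!}.$$
   Context: $e_k(\alpha_1,\dots,\alpha_n)$ denotes the degree-$k$ elementary symmetric function of $\alpha_1,\dots,\alpha_n$ (with $e_0=1$). *)

theory Defs
  imports "HOL-Analysis.Analysis"
begin

definition esym :: "nat \<Rightarrow> ('i \<Rightarrow> real) \<Rightarrow> 'i set \<Rightarrow> real" where
  "esym k a I = (\<Sum>S\<in>{S. S \<subseteq> I \<and> card S = k}. \<Prod>j\<in>S. a j)"

definition csc :: "real \<Rightarrow> real" where
  "csc x = 1 / sin x"

end

theory Submission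
  imports Defs "HOL-Computational_Algebra.Polynomial"
begin

text \<open>The identity \<open>Q\<^sub>n(sin\<^sup>2 x) cos x = cos ((2n+1) x)\<close> defines a polynomial \<open>Q\<^sub>n\<close>
  of degree \<open>n\<close> with \<open>Q\<^sub>n(0) = 1\<close>, whose coefficients \<open>(-4)\<^sup>k C(n+k, 2k)\<close> follow
  from the three-term recurrence of the multiple-angle cosines. The angles
  \<open>\<theta>\<^sub>j = (2j-1)\<pi>/(4n+2)\<close>, \<open>1 \<le> j \<le> n\<close>, lie in \<open>(0, \<pi>/2)\<close> and satisfy
  \<open>cos ((2n+1) \<theta>\<^sub>j) = 0\<close>, so the \<open>sin\<^sup>2 \<theta>\<^sub>j\<close> are \<open>n\<close> distinct nonzero roots of \<open>Q\<^sub>n\<close>.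
  Hence \<open>Q\<^sub>n(x) = \<Prod>\<^sub>j (1 - x csc\<^sup>2 \<theta>\<^sub>j)\<close>, and comparing the coefficients of
  \<open>x\<^sup>k\<close> gives \<open>e\<^sub>k(csc\<^sup>2 \<theta>\<^sub>j) = 4\<^sup>k C(n+k, 2k)\<close>.\<close>

lemma prod_one_plus_esym:
  assumes "finite A"
  shows "(\<Prod>j\<in>A. 1 + x * c j) = (\<Sum>k\<le>card A. esym k c A * x ^ k)"
proof -
  have "(\<Prod>j\<in>A. x * c j + 1) = (\<Sum>S\<in>Pow A. (\<Prod>j\<in>S. x * c j) * (\<Prod>j\<in>A - S. 1))"
    by (rule prod_add[OF assms])
  also have "\<dots> = (\<Sum>S\<in>Pow A. (\<Prod>j\<in>S. c j) * x ^ card S)"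
    by (simp add: prod.distrib mult.commute)
  also have "\<dots> = (\<Sum>k\<le>card A. \<Sum>S\<in>{S \<in> Pow A. card S = k}. (\<Prod>j\<in>S. c j) * x ^ card S)"
    by (rule sum.group[symmetric]) (use assms in \<open>auto intro: card_mono\<close>)
  also have "\<dots> = (\<Sum>k\<le>card A. esym k c A * x ^ k)"
    unfolding esym_def by (auto simp: sum_distrib_right intro!: sum.cong)
  finally show ?thesis
    by (simp only: add.commute)
qed

lemma esym_eq_0:
  assumes "finite A" and "card A < k"
  shows "esym k c A = 0"
proof -
  have no_subsets: "{S. S \<subseteq> A \<and> card S = k} = {}"
    using assms(2) by (auto dest: card_mono[OF assms(1)])
  show ?thesis
    unfolding esym_def no_subsets by simp
qed

lemma esym_uminus: "esym k (\<lambda>j. - c j) A = (-1) ^ k * esym k c A"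
  unfolding esym_def by (simp add: prod_uminus sum_distrib_left)

lemma coeff_prod_linear_esym:
  assumes "finite A"
  shows "coeff (\<Prod>j\<in>A. [:1, c j:]) k = esym k c A"
proof -
  have "(\<Prod>j\<in>A. [:1, c j:]) = (\<Sum>i\<le>card A. monom (esym i c A) i)"
    by (rule poly_eq_poly_eq_iff[THEN iffD1])
      (simp add: fun_eq_iff poly_prod poly_sum poly_monom prod_one_plus_esym[OF assms])
  then show ?thesis
    by (cases "k \<le> card A") (simp_all add: coeff_sum_monom coeff_sum esym_eq_0[OF assms])
qed

lemma poly_eq_prod_inverse_roots:
  fixes p :: "'a :: field poly" and r :: "'i \<Rightarrow> 'a"
  assumes "finite A" and "inj_on r A" and "\<And>j. j \<in> A \<Longrightarrow> r j \<noteq> 0"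
    and "\<And>j. j \<in> A \<Longrightarrow> poly p (r j) = 0"
    and "degree p = card A" and "poly p 0 = 1"
  shows "p = (\<Prod>j\<in>A. [:1, - 1 / r j:])"
proof (rule poly_eqI_degree[where A = "insert 0 (r ` A)"])
  let ?q = "\<Prod>j\<in>A. [:1, - 1 / r j:]"
  show "poly p x = poly ?q x" if "x \<in> insert 0 (r ` A)" for x
    using that assms by (auto simp: poly_prod)
  have card: "card (insert 0 (r ` A)) = card A + 1"
    using assms by (subst card_insert_disjoint) (auto simp: card_image)
  then show "degree p < card (insert 0 (r ` A))"
    using assms by simp
  have "degree ?q \<le> (\<Sum>j\<in>A. degree [:1, - 1 / r j:])"
    using degree_prod_sum_le[OF assms(1), of "\<lambda>j. [:1, - 1 / r j:]"] by (simp only: comp_def)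
  also have "\<dots> \<le> (\<Sum>j\<in>A. 1)"
    by (rule sum_mono) simp
  finally show "degree ?q < card (insert 0 (r ` A))"
    using card by simp
qed

lemma inj_on_sin_squared: "inj_on (\<lambda>x. sin x ^ 2) {0..pi/2}"
proof
  fix x y assume x: "x \<in> {0..pi/2}" and y: "y \<in> {0..pi/2}" and eq: "sin x ^ 2 = sin y ^ 2"
  have "0 \<le> sin x" "0 \<le> sin y"
    using x y by (auto intro!: sin_ge_zero)
  with eq have "sin x = sin y"
    by (metis power2_eq_iff_nonneg)
  then show "x = y"
    using x y by (intro sin_inj_pi[of x y]) auto
qed

text \<open>The recurrence comes from \<open>cos (y + 2x) = 2 cos (2x) cos y - cos (y - 2x)\<close> and
  \<open>cos (2x) = 1 - 2 sin\<^sup>2 x\<close>.\<close>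
fun odd_cos_poly :: "nat \<Rightarrow> real poly" where
  "odd_cos_poly 0 = 1"
| "odd_cos_poly (Suc 0) = [:1, -4:]"
| "odd_cos_poly (Suc (Suc n)) = [:2, -4:] * odd_cos_poly (Suc n) - odd_cos_poly n"

lemma poly_odd_cos_poly_sin_squared:
  "poly (odd_cos_poly n) (sin x ^ 2) * cos x = cos ((2 * real n + 1) * x)"
proof (induction n rule: odd_cos_poly.induct)
  case 1
  show ?case by simp
next
  case 2
  have "(1 - 4 * sin x ^ 2) * cos x = cos (3 * x)"
    unfolding cos_treble_cos sin_squared_eq by (simp add: algebra_simps power3_eq_cube power2_eq_square)
  then show ?case by (simp add: mult.commute)
next
  case (3 n)
  let ?s = "sin x ^ 2" and ?y = "(2 * real (Suc n) + 1) * x"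
  have "poly (odd_cos_poly (Suc (Suc n))) ?s * cos x
      = 2 * (1 - 2 * ?s) * (poly (odd_cos_poly (Suc n)) ?s * cos x) - poly (odd_cos_poly n) ?s * cos x"
    by (simp add: algebra_simps)
  also have "\<dots> = 2 * (1 - 2 * ?s) * cos ?y - cos (?y - 2 * x)"
    using 3 by (simp add: algebra_simps)
  also have "\<dots> = 2 * cos (2 * x) * cos ?y - cos (?y - 2 * x)"
    by (simp add: cos_double_sin)
  also have "\<dots> = cos (?y + 2 * x)"
    by (simp add: cos_add cos_diff)
  also have "?y + 2 * x = (2 * real (Suc (Suc n)) + 1) * x"
    by (simp add: algebra_simps)
  finally show ?case .
qed

lemma coeff_odd_cos_poly:
  "coeff (odd_cos_poly n) k = (-4) ^ k * real ((n + k) choose (2 * k))"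
proof (induction n arbitrary: k rule: odd_cos_poly.induct)
  case 1
  show ?case by (cases k) (simp_all add: binomial_eq_0 del: binomial_Suc_Suc)
next
  case 2
  consider "k = 0" | "k = 1" | m where "k = Suc (Suc m)"
    by (metis One_nat_def not0_implies_Suc)
  then show ?case
    by cases (simp_all add: binomial_eq_0 numeral_2_eq_2)
next
  case (3 n)
  show ?case
  proof (cases k)
    case 0
    with 3 show ?thesis by simp
  next
    case (Suc m)
    have pascal: "real (a + 2 choose (b + 2))
        = 2 * real (a + 1 choose (b + 2)) + real (a choose b) - real (a choose (b + 2))" for a b
      by simp
    have "coeff (odd_cos_poly (Suc (Suc n))) k
        = 2 * coeff (odd_cos_poly (Suc n)) k - 4 * coeff (odd_cos_poly (Suc n)) m
          - coeff (odd_cos_poly n) k"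
      using Suc by (simp add: coeff_pCons)
    also have "\<dots> = (-4) ^ k * (2 * real (n + m + 1 + 1 choose (2 * m + 2))
        + real (n + m + 1 choose (2 * m)) - real (n + m + 1 choose (2 * m + 2)))"
      using Suc by (simp add: "3.IH" algebra_simps)
    also have "\<dots> = (-4) ^ k * real (Suc (Suc n) + k choose (2 * k))"
      using Suc by (simp only: pascal) (simp add: algebra_simps)
    finally show ?thesis .
  qed
qed

lemma degree_odd_cos_poly: "degree (odd_cos_poly n) = n"
proof (rule antisym)
  show "degree (odd_cos_poly n) \<le> n"
    by (rule degree_le) (auto simp: coeff_odd_cos_poly binomial_eq_0)
  show "n \<le> degree (odd_cos_poly n)"
    by (rule le_degree) (simp add: coeff_odd_cos_poly)
qed

lemma poly_odd_cos_poly_eq_0: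
  assumes "cos ((2 * real n + 1) * x) = 0" and "cos x \<noteq> 0"
  shows "poly (odd_cos_poly n) (sin x ^ 2) = 0"
  using poly_odd_cos_poly_sin_squared[of n x] assms by simp

lemma cos_odd_multiple_eq_0:
  "cos ((2 * real n + 1) * ((2 * real j - 1) * pi / (4 * real n + 2))) = 0"
proof -
  have "(2 * real n + 1) * ((2 * real j - 1) * pi / (4 * real n + 2)) = of_int (2 * int j - 1) * (pi / 2)"
    by (simp add: field_simps)
  moreover have "odd (2 * int j - 1)"
    by simp
  ultimately show ?thesis
    using cos_zero_iff_int by blast
qed

lemma odd_angle_bounds:
  assumes "1 \<le> j" and "j \<le> n"
  shows "(2 * real j - 1) * pi / (4 * real n + 2) \<in> {0<..<pi/2}"
proof -
  have "0 < (2 * real j - 1) * pi" and "(2 * real j - 1) * pi < (2 * real n + 1) * pi"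
    using assms by (auto intro: mult_strict_right_mono)
  then show ?thesis
    by (simp add: field_simps)
qed

lemma odd_cos_poly_eq_prod:
  "odd_cos_poly n = (\<Prod>j\<in>{1..n}. [:1, - 1 / sin ((2 * real j - 1) * pi / (4 * real n + 2)) ^ 2:])"
proof -
  define \<theta> where "\<theta> j = (2 * real j - 1) * pi / (4 * real n + 2)" for j :: nat
  have \<theta>_bounds: "\<theta> j \<in> {0<..<pi/2}" if "j \<in> {1..n}" for j
    using odd_angle_bounds that unfolding \<theta>_def by auto
  have "inj_on \<theta> {1..n}"
    by (auto simp: inj_on_def \<theta>_def)
  moreover have "inj_on (\<lambda>x. sin x ^ 2) (\<theta> ` {1..n})"
    by (rule inj_on_subset[OF inj_on_sin_squared]) (use \<theta>_bounds in fastforce)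
  ultimately have inj: "inj_on (\<lambda>j. sin (\<theta> j) ^ 2) {1..n}"
    using comp_inj_on by (auto simp: o_def)
  have roots: "poly (odd_cos_poly n) (sin (\<theta> j) ^ 2) = 0" if "j \<in> {1..n}" for j
  proof (rule poly_odd_cos_poly_eq_0)
    show "cos ((2 * real n + 1) * \<theta> j) = 0"
      unfolding \<theta>_def by (rule cos_odd_multiple_eq_0)
    show "cos (\<theta> j) \<noteq> 0"
      using \<theta>_bounds[OF that] cos_gt_zero_pi[of "\<theta> j"] by auto
  qed
  have "odd_cos_poly n = (\<Prod>j\<in>{1..n}. [:1, - 1 / sin (\<theta> j) ^ 2:])"
  proof (rule poly_eq_prod_inverse_roots)
    show "sin (\<theta> j) ^ 2 \<noteq> 0" if "j \<in> {1..n}" for j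
      using \<theta>_bounds[OF that] sin_gt_zero[of "\<theta> j"] by auto
    show "poly (odd_cos_poly n) 0 = 1"
      by (simp add: poly_0_coeff_0 coeff_odd_cos_poly)
  qed (use inj roots in \<open>simp_all add: degree_odd_cos_poly\<close>)
  then show ?thesis
    by (simp add: \<theta>_def)
qed

theorem mainTheorem11:
  fixes n k :: nat
  assumes "n \<ge> 1" and "k \<le> n"
  shows "esym k (\<lambda>j. (csc ((2 * real j - 1) * pi / (4 * real n + 2)))^2) {1..n}
         = fact (n + k) * 4 ^ k / (fact (2 * k) * fact (n - k))"
proof -
  let ?c = "\<lambda>j. (csc ((2 * real j - 1) * pi / (4 * real n + 2)))^2"
  have "coeff (odd_cos_poly n) k = (-1) ^ k * esym k ?c {1..n}"
    by (subst odd_cos_poly_eq_prod)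
      (simp add: coeff_prod_linear_esym esym_uminus csc_def power_one_over)
  then have "esym k ?c {1..n} = 4 ^ k * real ((n + k) choose (2 * k))"
    by (simp add: coeff_odd_cos_poly power_minus[of "4::real"])
  also have "\<dots> = fact (n + k) * 4 ^ k / (fact (2 * k) * fact (n - k))"
    using assms(2) by (simp add: binomial_fact)
  finally show ?thesis .
qed

end
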